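(* There is a comonad in Kleisli form $(\mathbb{H}, \varepsilon, (\cdot)^* )$ on the category $\mathsf{HGraph}$ of hypergraphs. The counit is defined on representatives by $\varepsilon([p,a]) = a$. Coextension of a hypergraph morphism $h:\mathbb{H}\mathcal{H}_1\to\mathcal{H}_2$ is defined on representatives by \[ h^*([[U_1,\ldots,U_n], a]) = [[V_1,\ldots,V_n], h([[U_1,\ldots,U_n], a])] \] where $V_j = \{ h([[U_1,\ldots,U_j], b]) \mid b \in U_j \}$ for $1 \leq j \leq n$.
   Context: A hypergraph $(V,E)$ consists of a set $V$ of vertices and a family $E$ of finite subsets of $V$ (hyperedges); a morphism is a function on vertices mapping hyperedges to hyperedges. For a hypergraph, a focussed play is $\langle p,a\rangle$ with $p=[U_1,\ldots,U_n]$ a non-empty list of hyperedges and $a\in U_n$. Define $\langle p,a\rangle\sim\langle q,a'\rangle$ iff $a=a'$, the greatest common prefix $p\sqcap q$ is non-empty, and $a$ belongs to the last hyperedge of every play on the prefix-order paths from $p\sqcap q$ to $p$ and to $q$; $[p,a]$ denotes the equivalence class. $\mathbb{H}(V,E)$ has vertices the classes $[p,a]$ and hyperedges the sets $\{[p,a]\mid a\in U\}$ for a play $p$ with last element $U \in E$. *)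

theory Defs
  imports Main "HOL-Library.Sublist"
begin

type_synonym 'a hgraph = "'a set \<times> 'a set set"

definition hypergraph :: "'a hgraph \<Rightarrow> bool" where
  "hypergraph G \<longleftrightarrow> (\<forall>U\<in>snd G. finite U \<and> U \<subseteq> fst G)"

definition hmorph :: "'a hgraph \<Rightarrow> 'b hgraph \<Rightarrow> ('a \<Rightarrow> 'b) \<Rightarrow> bool" where
  "hmorph G1 G2 f \<longleftrightarrow> f ` fst G1 \<subseteq> fst G2 \<and> (\<forall>U\<in>snd G1. f ` U \<in> snd G2)"

definition fplay :: "'a set set \<Rightarrow> 'a set list \<Rightarrow> 'a \<Rightarrow> bool" where
  "fplay E p a \<longleftrightarrow> p \<noteq> [] \<and> set p \<subseteq> E \<and> a \<in> last p"

definition play_sim :: "'a set list \<times> 'a \<Rightarrow> 'a set list \<times> 'a \<Rightarrow> bool" where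
  "play_sim x y \<longleftrightarrow>
     (let p = fst x; a = snd x; q = fst y; a' = snd y; r = longest_common_prefix p q in
       a = a' \<and> r \<noteq> [] \<and>
       (\<forall>s. prefix r s \<and> prefix s p \<longrightarrow> a \<in> last s) \<and>
       (\<forall>s. prefix r s \<and> prefix s q \<longrightarrow> a \<in> last s))"

definition pcls :: "'a set set \<Rightarrow> 'a set list \<Rightarrow> 'a \<Rightarrow> ('a set list \<times> 'a) set" where
  "pcls E p a = {(q, b). fplay E q b \<and> play_sim (p, a) (q, b)}"

definition HH :: "'a hgraph \<Rightarrow> ('a set list \<times> 'a) set hgraph" where
  "HH G = ({pcls (snd G) p a | p a. fplay (snd G) p a},
           {{pcls (snd G) p a | a. a \<in> last p} | p. p \<noteq> [] \<and> set p \<subseteq> snd G})"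

definition counit :: "('a set list \<times> 'a) set \<Rightarrow> 'a" where
  "counit c = snd (SOME x. x \<in> c)"

text \<open>The plays [V_1,...,V_n] in the coextension formula, for the play p = [U_1,...,U_n].\<close>
definition coext_list :: "'a set set \<Rightarrow> (('a set list \<times> 'a) set \<Rightarrow> 'b) \<Rightarrow> 'a set list \<Rightarrow> 'b set list" where
  "coext_list E1 h p = map (\<lambda>j. {h (pcls E1 (take (Suc j) p) b) | b. b \<in> p ! j}) [0..<length p]"

definition coext :: "'a hgraph \<Rightarrow> 'b hgraph \<Rightarrow> (('a set list \<times> 'a) set \<Rightarrow> 'b)
                      \<Rightarrow> ('a set list \<times> 'a) set \<Rightarrow> ('b set list \<times> 'b) set" where
  "coext G1 G2 h c = (let x = (SOME x. x \<in> c) in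
      pcls (snd G2) (coext_list (snd G1) h (fst x)) (h c))"

end

theory Submission
  imports Defs
begin

text \<open>
  Everything is computed on representatives, so the heart of the matter is that coextension is
  well defined. Two focussed plays \<open>(p, a)\<close> and \<open>(q, a)\<close> are equivalent when they share a non-empty
  prefix \<open>r\<close> such that \<open>a\<close> stays in the last hyperedge of every play between \<open>r\<close> and \<open>p\<close> (resp. \<open>q\<close>).
  Every such intermediate play \<open>s\<close> satisfies \<open>[s, a] = [p, a]\<close>, and the construction
  \<open>[U\<^sub>1, \<dots>, U\<^sub>n] \<mapsto> [V\<^sub>1, \<dots>, V\<^sub>n]\<close> commutes with taking prefixes; hence \<open>h [p, a]\<close> stays in the last
  hyperedge of every play between the images of \<open>r\<close> and \<open>p\<close>, and the images are equivalent again.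
  The comonad laws then reduce to pointwise identities between these lists of hyperedges.
\<close>

definition keeps_focus :: "'a set list \<Rightarrow> 'a set list \<Rightarrow> 'a \<Rightarrow> bool" where
  "keeps_focus r p a \<longleftrightarrow> (\<forall>s. prefix r s \<and> prefix s p \<longrightarrow> a \<in> last s)"

lemma keeps_focus_mono:
  "keeps_focus r p a \<Longrightarrow> prefix r t \<Longrightarrow> keeps_focus t p a"
  unfolding keeps_focus_def by (meson prefix_order.trans)

lemma play_sim_iff_common_prefix:
  "play_sim (p, a) (q, b) \<longleftrightarrow>
     a = b \<and> (\<exists>r. r \<noteq> [] \<and> prefix r p \<and> prefix r q \<and> keeps_focus r p a \<and> keeps_focus r q a)"
    (is "?lhs \<longleftrightarrow> ?rhs")
proof
  assume ?lhs
  then show ?rhs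
    unfolding play_sim_def keeps_focus_def Let_def
    by (auto intro!: exI[of _ "longest_common_prefix p q"]
        longest_common_prefix_prefix1 longest_common_prefix_prefix2)
next
  assume ?rhs
  then obtain r where "a = b" "r \<noteq> []" "prefix r p" "prefix r q"
    and focus: "keeps_focus r p a" "keeps_focus r q a"
    by blast
  moreover have lcp: "prefix r (longest_common_prefix p q)"
    using \<open>prefix r p\<close> \<open>prefix r q\<close> by (rule longest_common_prefix_max_prefix)
  ultimately show ?lhs
    using keeps_focus_mono[OF focus(1) lcp] keeps_focus_mono[OF focus(2) lcp]
    unfolding play_sim_def keeps_focus_def Let_def by auto
qed

lemma play_sim_refl: "fplay E p a \<Longrightarrow> play_sim (p, a) (p, a)"
  unfolding play_sim_iff_common_prefix fplay_def keeps_focus_def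
  by (auto intro!: exI[of _ p] dest: prefix_order.antisym)

lemma play_sim_sym: "play_sim (p, a) (q, b) \<Longrightarrow> play_sim (q, b) (p, a)"
  unfolding play_sim_iff_common_prefix by blast

lemma keeps_focus_extend:
  assumes "keeps_focus r p a" "prefix r t" "prefix t p" "prefix t q" "keeps_focus t q a"
  shows "keeps_focus r q a"
  unfolding keeps_focus_def
proof (intro allI impI, elim conjE)
  fix s assume "prefix r s" "prefix s q"
  from \<open>prefix t q\<close> \<open>prefix s q\<close> consider "prefix t s" | "prefix s t"
    using prefix_same_cases by blast
  then show "a \<in> last s"
  proof cases
    case 1
    with \<open>prefix s q\<close> \<open>keeps_focus t q a\<close> show ?thesis unfolding keeps_focus_def by blast
  next
    case 2
    then have "prefix s p" using \<open>prefix t p\<close> by (rule prefix_order.trans)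
    with \<open>prefix r s\<close> \<open>keeps_focus r p a\<close> show ?thesis unfolding keeps_focus_def by blast
  qed
qed

lemma play_sim_trans:
  assumes "play_sim (p, a) (q, b)" "play_sim (q, b) (t, c)"
  shows "play_sim (p, a) (t, c)"
proof -
  obtain r1 where "a = b" "r1 \<noteq> []" "prefix r1 p" "prefix r1 q"
    and r1: "keeps_focus r1 p a" "keeps_focus r1 q a"
    using assms(1) unfolding play_sim_iff_common_prefix by blast
  obtain r2 where "b = c" "r2 \<noteq> []" "prefix r2 q" "prefix r2 t"
    and r2: "keeps_focus r2 q a" "keeps_focus r2 t a"
    using assms(2) \<open>a = b\<close> unfolding play_sim_iff_common_prefix by blast
  consider "prefix r1 r2" | "prefix r2 r1"
    using \<open>prefix r1 q\<close> \<open>prefix r2 q\<close> prefix_same_cases by blast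
  then show ?thesis
  proof cases
    case 1
    have "keeps_focus r1 t a"
      using keeps_focus_extend[OF r1(2) 1 \<open>prefix r2 q\<close> \<open>prefix r2 t\<close> r2(2)] .
    moreover have "prefix r1 t" using 1 \<open>prefix r2 t\<close> by (rule prefix_order.trans)
    ultimately show ?thesis
      using \<open>a = b\<close> \<open>b = c\<close> \<open>r1 \<noteq> []\<close> \<open>prefix r1 p\<close> r1(1)
      unfolding play_sim_iff_common_prefix by blast
  next
    case 2
    have "keeps_focus r2 p a"
      using keeps_focus_extend[OF r2(1) 2 \<open>prefix r1 q\<close> \<open>prefix r1 p\<close> r1(1)] .
    moreover have "prefix r2 p" using 2 \<open>prefix r1 p\<close> by (rule prefix_order.trans)
    ultimately show ?thesis
      using \<open>a = b\<close> \<open>b = c\<close> \<open>r2 \<noteq> []\<close> \<open>prefix r2 t\<close> r2(2)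
      unfolding play_sim_iff_common_prefix by blast
  qed
qed

lemma pcls_self: "fplay E p a \<Longrightarrow> (p, a) \<in> pcls E p a"
  unfolding pcls_def by (simp add: play_sim_refl)

lemma pcls_eqI: "play_sim (p, a) (q, b) \<Longrightarrow> pcls E p a = pcls E q b"
  unfolding pcls_def by (blast intro: play_sim_trans play_sim_sym)

lemma pcls_prefix_eq:
  assumes "prefix r p" "r \<noteq> []" "keeps_focus r p a"
  shows "pcls E r a = pcls E p a"
proof (rule pcls_eqI)
  have "keeps_focus r r a"
    using \<open>keeps_focus r p a\<close> \<open>prefix r p\<close> unfolding keeps_focus_def
    by (blast dest: prefix_order.antisym)
  with assms show "play_sim (r, a) (p, a)"
    unfolding play_sim_iff_common_prefix by blast
qed

lemma some_in_pcls:
  assumes "fplay E p a"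
  obtains q where "(SOME x. x \<in> pcls E p a) = (q, a)" "play_sim (p, a) (q, a)"
proof -
  have "(SOME x. x \<in> pcls E p a) \<in> pcls E p a"
    using pcls_self[OF assms] by (rule someI)
  with that show thesis
    unfolding pcls_def play_sim_iff_common_prefix by auto
qed

lemma counit_pcls: "fplay E p a \<Longrightarrow> counit (pcls E p a) = a"
  unfolding counit_def by (metis some_in_pcls snd_conv)

lemma length_coext_list [simp]: "length (coext_list E h p) = length p"
  unfolding coext_list_def by simp

lemma coext_list_eq_Nil_iff [simp]: "coext_list E h p = [] \<longleftrightarrow> p = []"
  by (metis length_0_conv length_coext_list)

lemma nth_coext_list:
  "j < length p \<Longrightarrow> coext_list E h p ! j = (\<lambda>b. h (pcls E (take (Suc j) p) b)) ` (p ! j)"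
  unfolding coext_list_def by auto

lemma take_coext_list: "take k (coext_list E h p) = coext_list E h (take k p)"
  by (rule nth_equalityI) (auto simp: nth_coext_list)

lemma last_coext_list:
  "p \<noteq> [] \<Longrightarrow> last (coext_list E h p) = (\<lambda>b. h (pcls E p b)) ` last p"
  by (simp add: last_conv_nth nth_coext_list)

lemma prefix_coext_list: "prefix r p \<Longrightarrow> prefix (coext_list E h r) (coext_list E h p)"
  by (metis prefix_def append_eq_conv_conj take_coext_list take_is_prefix)

lemma prefix_coext_listE:
  assumes "prefix s (coext_list E h p)"
  obtains t where "prefix t p" "s = coext_list E h t"
  using assms that by (metis append_eq_conv_conj prefix_def take_coext_list take_is_prefix)

lemma fplay_take_Suc:
  "set p \<subseteq> E \<Longrightarrow> j < length p \<Longrightarrow> b \<in> p ! j \<Longrightarrow> fplay E (take (Suc j) p) b"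
  unfolding fplay_def by (auto simp: take_Suc_conv_app_nth dest: in_set_takeD)

lemma HH_vertI: "fplay (snd G) p a \<Longrightarrow> pcls (snd G) p a \<in> fst (HH G)"
  unfolding HH_def by auto

lemma HH_vertE:
  assumes "x \<in> fst (HH G)"
  obtains p a where "fplay (snd G) p a" "x = pcls (snd G) p a"
  using assms unfolding HH_def by auto

lemma HH_edgeI:
  "p \<noteq> [] \<Longrightarrow> set p \<subseteq> snd G \<Longrightarrow> (\<lambda>a. pcls (snd G) p a) ` last p \<in> snd (HH G)"
  unfolding HH_def by auto

lemma HH_edgeE:
  assumes "U \<in> snd (HH G)"
  obtains p where "p \<noteq> []" "set p \<subseteq> snd G" "U = (\<lambda>a. pcls (snd G) p a) ` last p"
  using assms unfolding HH_def by auto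

lemma set_coext_list_subset:
  assumes h: "hmorph (HH G1) G2 h" and p: "set p \<subseteq> snd G1"
  shows "set (coext_list (snd G1) h p) \<subseteq> snd G2"
proof
  fix V assume "V \<in> set (coext_list (snd G1) h p)"
  then obtain j where j: "j < length p" and V: "V = coext_list (snd G1) h p ! j"
    by (auto simp: in_set_conv_nth)
  let ?t = "take (Suc j) p"
  have "?t \<noteq> []" "set ?t \<subseteq> snd G1"
    using j p by (auto dest: in_set_takeD)
  then have "h ` (\<lambda>b. pcls (snd G1) ?t b) ` last ?t \<in> snd G2"
    using h HH_edgeI unfolding hmorph_def by blast
  moreover have "h ` (\<lambda>b. pcls (snd G1) ?t b) ` last ?t = V"
    using j by (auto simp: V nth_coext_list take_Suc_conv_app_nth)
  ultimately show "V \<in> snd G2" by simp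
qed

lemma fplay_coext_list:
  assumes "hmorph (HH G1) G2 h" "fplay (snd G1) p a"
  shows "fplay (snd G2) (coext_list (snd G1) h p) (h (pcls (snd G1) p a))"
  using assms set_coext_list_subset[OF assms(1)]
  unfolding fplay_def by (auto simp: last_coext_list)

lemma keeps_focus_coext_list:
  assumes "prefix r p" "r \<noteq> []" "keeps_focus r p a"
  shows "keeps_focus (coext_list E h r) (coext_list E h p) (h (pcls E p a))"
  unfolding keeps_focus_def
proof (intro allI impI, elim conjE)
  fix s assume s: "prefix (coext_list E h r) s" "prefix s (coext_list E h p)"
  then obtain t where "prefix t p" and s_eq: "s = coext_list E h t"
    by (blast elim: prefix_coext_listE)
  have "length r \<le> length t"
    using prefix_length_le[OF s(1)] s_eq by simp
  then have "prefix r t"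
    using \<open>prefix r p\<close> \<open>prefix t p\<close> by (blast intro: prefix_length_prefix)
  then have "t \<noteq> []" "a \<in> last t"
    using assms \<open>prefix t p\<close> unfolding keeps_focus_def by auto
  moreover have "pcls E t a = pcls E p a"
    using \<open>prefix t p\<close> \<open>t \<noteq> []\<close> keeps_focus_mono[OF assms(3) \<open>prefix r t\<close>]
    by (rule pcls_prefix_eq)
  ultimately show "h (pcls E p a) \<in> last s"
    unfolding s_eq last_coext_list[OF \<open>t \<noteq> []\<close>] by (metis image_eqI)
qed

lemma play_sim_coext_list:
  assumes "play_sim (p, a) (q, a)"
  shows "play_sim (coext_list E h p, h (pcls E p a)) (coext_list E h q, h (pcls E p a))"
proof -
  obtain r where r: "r \<noteq> []" "prefix r p" "prefix r q" "keeps_focus r p a" "keeps_focus r q a"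
    using assms unfolding play_sim_iff_common_prefix by blast
  have "pcls E q a = pcls E p a"
    using assms by (rule pcls_eqI[symmetric])
  with r keeps_focus_coext_list[of r p a E h] keeps_focus_coext_list[of r q a E h]
  show ?thesis
    unfolding play_sim_iff_common_prefix
    by (intro conjI refl exI[of _ "coext_list E h r"]) (simp_all add: prefix_coext_list)
qed

lemma coext_pcls:
  assumes "fplay (snd G1) p a"
  shows "coext G1 G2 h (pcls (snd G1) p a)
           = pcls (snd G2) (coext_list (snd G1) h p) (h (pcls (snd G1) p a))"
proof -
  obtain q where q: "(SOME x. x \<in> pcls (snd G1) p a) = (q, a)" "play_sim (p, a) (q, a)"
    using assms by (rule some_in_pcls)
  have "coext G1 G2 h (pcls (snd G1) p a)
          = pcls (snd G2) (coext_list (snd G1) h q) (h (pcls (snd G1) p a))"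
    unfolding coext_def Let_def q(1) by simp
  also have "\<dots> = pcls (snd G2) (coext_list (snd G1) h p) (h (pcls (snd G1) p a))"
    using play_sim_coext_list[OF q(2)] by (rule pcls_eqI[symmetric])
  finally show ?thesis .
qed

lemma hypergraph_HH:
  assumes "hypergraph G"
  shows "hypergraph (HH G)"
  unfolding hypergraph_def
proof
  fix U assume "U \<in> snd (HH G)"
  then obtain p where p: "p \<noteq> []" "set p \<subseteq> snd G" and U: "U = (\<lambda>a. pcls (snd G) p a) ` last p"
    by (rule HH_edgeE)
  have "finite (last p)"
    using assms p last_in_set unfolding hypergraph_def by blast
  moreover have "U \<subseteq> fst (HH G)"
    using p by (auto simp: U fplay_def intro!: HH_vertI)
  ultimately show "finite U \<and> U \<subseteq> fst (HH G)" by (simp add: U)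
qed

lemma hmorph_counit:
  assumes "hypergraph G"
  shows "hmorph (HH G) G counit"
  unfolding hmorph_def
proof
  show "counit ` fst (HH G) \<subseteq> fst G"
  proof
    fix y assume "y \<in> counit ` fst (HH G)"
    then obtain p a where pa: "fplay (snd G) p a" and "y = counit (pcls (snd G) p a)"
      by (blast elim: HH_vertE)
    then have "y = a" by (simp add: counit_pcls)
    moreover have "last p \<in> snd G"
      using pa last_in_set unfolding fplay_def by blast
    ultimately show "y \<in> fst G"
      using assms pa unfolding hypergraph_def fplay_def by blast
  qed
  show "\<forall>U\<in>snd (HH G). counit ` U \<in> snd G"
  proof
    fix U assume "U \<in> snd (HH G)"
    then obtain p where p: "p \<noteq> []" "set p \<subseteq> snd G" and U: "U = (\<lambda>a. pcls (snd G) p a) ` last p"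
      by (rule HH_edgeE)
    then have "counit ` U = last p"
      by (auto simp: image_image counit_pcls fplay_def)
    with p show "counit ` U \<in> snd G" by auto
  qed
qed

lemma hmorph_coext:
  assumes h: "hmorph (HH G1) G2 h"
  shows "hmorph (HH G1) (HH G2) (coext G1 G2 h)"
  unfolding hmorph_def
proof
  show "coext G1 G2 h ` fst (HH G1) \<subseteq> fst (HH G2)"
    by (auto elim!: HH_vertE simp: coext_pcls intro!: HH_vertI fplay_coext_list[OF h])
  show "\<forall>U\<in>snd (HH G1). coext G1 G2 h ` U \<in> snd (HH G2)"
  proof
    fix U assume "U \<in> snd (HH G1)"
    then obtain p where p: "p \<noteq> []" "set p \<subseteq> snd G1" and U: "U = (\<lambda>a. pcls (snd G1) p a) ` last p"
      by (rule HH_edgeE)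
    let ?P = "coext_list (snd G1) h p"
    have "coext G1 G2 h ` U = (\<lambda>a. pcls (snd G2) ?P (h (pcls (snd G1) p a))) ` last p"
      using p by (simp add: U image_image coext_pcls fplay_def cong: image_cong)
    also have "\<dots> = (\<lambda>b. pcls (snd G2) ?P b) ` last ?P"
      using p by (simp add: last_coext_list image_image)
    also have "\<dots> \<in> snd (HH G2)"
      using p set_coext_list_subset[OF h p(2)] by (simp add: HH_edgeI)
    finally show "coext G1 G2 h ` U \<in> snd (HH G2)" .
  qed
qed

lemma coext_list_counit: "set p \<subseteq> E \<Longrightarrow> coext_list E counit p = p"
  by (rule nth_equalityI) (auto simp: nth_coext_list counit_pcls fplay_take_Suc)

lemma coext_list_comp:
  assumes "set p \<subseteq> snd G1"
  shows "coext_list (snd G1) (g \<circ> coext G1 G2 h) p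
           = coext_list (snd G2) g (coext_list (snd G1) h p)"
proof (rule nth_equalityI)
  fix j assume "j < length (coext_list (snd G1) (g \<circ> coext G1 G2 h) p)"
  then have j: "j < length p" by simp
  have "coext G1 G2 h (pcls (snd G1) (take (Suc j) p) b)
          = pcls (snd G2) (take (Suc j) (coext_list (snd G1) h p)) (h (pcls (snd G1) (take (Suc j) p) b))"
    if "b \<in> p ! j" for b
    using coext_pcls[OF fplay_take_Suc[OF assms j that]] by (simp add: take_coext_list)
  with j show "coext_list (snd G1) (g \<circ> coext G1 G2 h) p ! j
                 = coext_list (snd G2) g (coext_list (snd G1) h p) ! j"
    by (simp add: nth_coext_list image_image cong: image_cong)
qed simp

lemma coext_counit:
  assumes "c \<in> fst (HH G)"
  shows "coext G G counit c = c"
proof -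
  obtain p a where pa: "fplay (snd G) p a" and c: "c = pcls (snd G) p a"
    using assms by (rule HH_vertE)
  then have "set p \<subseteq> snd G" unfolding fplay_def by simp
  with pa show ?thesis
    by (simp add: c coext_pcls coext_list_counit counit_pcls)
qed

lemma counit_coext:
  assumes "hmorph (HH G1) G2 h" "c \<in> fst (HH G1)"
  shows "counit (coext G1 G2 h c) = h c"
proof -
  obtain p a where pa: "fplay (snd G1) p a" and c: "c = pcls (snd G1) p a"
    using assms(2) by (rule HH_vertE)
  show ?thesis
    using counit_pcls[OF fplay_coext_list[OF assms(1) pa]] by (simp add: c coext_pcls[OF pa])
qed

lemma coext_comp:
  assumes "hmorph (HH G1) G2 h" "c \<in> fst (HH G1)"
  shows "coext G1 G3 (g \<circ> coext G1 G2 h) c = coext G2 G3 g (coext G1 G2 h c)"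
proof -
  obtain p a where pa: "fplay (snd G1) p a" and c: "c = pcls (snd G1) p a"
    using assms(2) by (rule HH_vertE)
  then have "set p \<subseteq> snd G1" unfolding fplay_def by simp
  then show ?thesis
    by (simp add: c coext_pcls[OF pa] coext_pcls[OF fplay_coext_list[OF assms(1) pa]]
        coext_list_comp)
qed

theorem theorem6p1:
  shows "(\<forall>G :: 'a hgraph. hypergraph G \<longrightarrow>
            hypergraph (HH G) \<and> hmorph (HH G) G counit \<and>
            (\<forall>p a. fplay (snd G) p a \<longrightarrow> counit (pcls (snd G) p a) = a))
       \<and> (\<forall>(G1 :: 'a hgraph) (G2 :: 'b hgraph) h. hypergraph G1 \<and> hypergraph G2 \<and> hmorph (HH G1) G2 h \<longrightarrow>
            hmorph (HH G1) (HH G2) (coext G1 G2 h) \<and>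
            (\<forall>p a. fplay (snd G1) p a \<longrightarrow>
               coext G1 G2 h (pcls (snd G1) p a) =
                 pcls (snd G2) (coext_list (snd G1) h p) (h (pcls (snd G1) p a))))
       \<and> (\<forall>G :: 'a hgraph. hypergraph G \<longrightarrow>
            (\<forall>c\<in>fst (HH G). coext G G counit c = c))
       \<and> (\<forall>(G1 :: 'a hgraph) (G2 :: 'b hgraph) h. hypergraph G1 \<and> hypergraph G2 \<and> hmorph (HH G1) G2 h \<longrightarrow>
            (\<forall>c\<in>fst (HH G1). counit (coext G1 G2 h c) = h c))
       \<and> (\<forall>(G1 :: 'a hgraph) (G2 :: 'b hgraph) (G3 :: 'c hgraph) h g.
            hypergraph G1 \<and> hypergraph G2 \<and> hypergraph G3 \<and>
            hmorph (HH G1) G2 h \<and> hmorph (HH G2) G3 g \<longrightarrow>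
            (\<forall>c\<in>fst (HH G1). coext G1 G3 (g \<circ> coext G1 G2 h) c = coext G2 G3 g (coext G1 G2 h c)))"
  by (auto simp: hypergraph_HH hmorph_counit counit_pcls hmorph_coext coext_pcls
      coext_counit counit_coext coext_comp)

end
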